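(* Consider the payment mechanism that, given submissions $X_1',\dots,X_m'$, computes the losses $L_i\in[0,1]$ of Algorithm 2 (described below) and pays agent $i$ the amount $\pi_i=\frac Bm(1-L_i)$, where $B>0$ is a fixed budget. Then this mechanism is individually rational ($\pi_i\ge0$ for all $i$ always), budget feasible ($\sum_i\pi_i\le B$ always), and truthful: for every $i$ and strategy $f_i$, $\mathbb E[\pi_i(\mathrm{id},\dots,\mathrm{id})]\ge\mathbb E[\pi_i(f_i,(\mathrm{id})_{j\ne i})]$.
   Context: Algorithm 2. Fix $m\ge2$ agents and a measurable data space $\mathcal X$. A prior $\Pi$ is a probability distribution over probability distributions on $\mathcal X$; $D\sim\Pi$; conditionally on $D$, agent $i$ holds $X_i=(X_{i,1},\dots,X_{i,n_i})$ i.i.d. from $D$, independent across agents. A strategy is a measurable map $f:\bigcup_{\ell\ge0}\mathcal X^\ell\to\bigcup_{\ell\ge0}\mathcal X^\ell$; agent $i$ submits $X_i'=f_i(X_i)$; $\mathrm{id}$ is the identity. Feature maps $\varphi_1,\dots,\varphi_K:\mathcal X\to\mathbb R$ are measurable; $\varphi_k(S)=\{\varphi_k(x):x\in S\}$; $F_S(t)=\frac1{|S|}\sum_{s\in S}\mathbf 1\{s\le t\}$. For $k\in[K],j\ge0,r\ge1$, $h^{(k)}_{j,r}:\mathcal X^j\times\mathbb R\to[0,1]$ is measurable with $h^{(k)}_{j,r}(Y_1,\dots,Y_j,\varphi_k(T))=\mathbb E[F_{\varphi_k(\{Z_1,\dots,Z_r\})}(\varphi_k(T))\mid Y_1,\dots,Y_j,\varphi_k(T)]$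 a.s. whenever $D\sim\Pi$ and, given $D$, $Y_1,\dots,Y_j,T,Z_1,\dots,Z_r$ are i.i.d. from $D$. For each $i$: $X'_{-i}=\bigcup_{j\ne i}X'_j$ (at least 2 elements), $T_i$ uniformly random from $X'_{-i}$, $Z_i=X'_{-i}\setminus\{T_i\}$, $L_i=\frac1K\sum_k\big(h^{(k)}_{|X_i'|,|Z_i|}(X_i',\varphi_k(T_i))-F_{\varphi_k(Z_i)}(\varphi_k(T_i))\big)^2$. Expectations are over $D\sim\Pi$, data and all randomness. *)

theory Defs
  imports "HOL-Probability.Probability"
begin

text \<open>Datasets are finite lists (multisets with order) of points of the data space.\<close>

definition list_tuple :: "nat \<Rightarrow> 'a list \<Rightarrow> (nat \<Rightarrow> 'a)" where
  "list_tuple l ys = restrict (\<lambda>k. ys ! k) {..<l}"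

definition tuple_list :: "nat \<Rightarrow> (nat \<Rightarrow> 'a) \<Rightarrow> 'a list" where
  "tuple_list l y = map y [0..<l]"

definition listM :: "'a measure \<Rightarrow> 'a list measure" where
  "listM X = sigma (lists (space X))
     (\<Union>l. {{ys \<in> lists (space X). length ys = l \<and> list_tuple l ys \<in> A} | A.
              A \<in> sets (PiM {..<l} (\<lambda>_. X))})"

definition strategy :: "'a measure \<Rightarrow> ('a list \<Rightarrow> 'a list) \<Rightarrow> bool" where
  "strategy X f \<longleftrightarrow> (\<forall>l. (\<lambda>y. f (tuple_list l y)) \<in> measurable (PiM {..<l} (\<lambda>_. X)) (listM X))"

definition ecdf :: "real list \<Rightarrow> real \<Rightarrow> real" where
  "ecdf S t = real (length (filter (\<lambda>s. s \<le> t) S)) / real (length S)"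

text \<open>X'_{-i}: the pooled submissions of all agents j \<noteq> i (agents are 0..m-1).\<close>
definition others :: "nat \<Rightarrow> (nat \<Rightarrow> 'a list) \<Rightarrow> nat \<Rightarrow> 'a list" where
  "others m xs i = concat (map xs (filter (\<lambda>j. j \<noteq> i) [0..<m]))"

definition remove_at :: "nat \<Rightarrow> 'a list \<Rightarrow> 'a list" where
  "remove_at t zs = take t zs @ drop (Suc t) zs"

text \<open>The loss L_i of Algorithm 2 when the test point T_i is the t-th element of X'_{-i}.
  h k j r ys v stands for h^{(k)}_{j,r}(ys, v).\<close>
definition loss ::
  "nat \<Rightarrow> (nat \<Rightarrow> 'a \<Rightarrow> real) \<Rightarrow> (nat \<Rightarrow> nat \<Rightarrow> nat \<Rightarrow> 'a list \<Rightarrow> real \<Rightarrow> real)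
   \<Rightarrow> nat \<Rightarrow> (nat \<Rightarrow> 'a list) \<Rightarrow> nat \<Rightarrow> nat \<Rightarrow> real" where
  "loss K \<phi> h m xs i t =
     (let T = others m xs i ! t; Z = remove_at t (others m xs i) in
      (1 / real K) * (\<Sum>k<K. (h k (length (xs i)) (length Z) (xs i) (\<phi> k T)
                               - ecdf (map (\<phi> k) Z) (\<phi> k T))\<^sup>2))"

definition payment ::
  "real \<Rightarrow> nat \<Rightarrow> (nat \<Rightarrow> 'a \<Rightarrow> real) \<Rightarrow> (nat \<Rightarrow> nat \<Rightarrow> nat \<Rightarrow> 'a list \<Rightarrow> real \<Rightarrow> real)
   \<Rightarrow> nat \<Rightarrow> (nat \<Rightarrow> 'a list) \<Rightarrow> nat \<Rightarrow> nat \<Rightarrow> real" where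
  "payment B K \<phi> h m xs i t = B / real m * (1 - loss K \<phi> h m xs i t)"

text \<open>Expected payment of agent i (over T_i uniform in X'_{-i}, the data given D, and D \<sim> Prior)
  when agents use strategy profile fs and agent j holds n j points.\<close>
definition expected_payment ::
  "'a measure measure \<Rightarrow> nat \<Rightarrow> (nat \<Rightarrow> nat) \<Rightarrow> (nat \<Rightarrow> 'a list \<Rightarrow> 'a list)
   \<Rightarrow> real \<Rightarrow> nat \<Rightarrow> (nat \<Rightarrow> 'a \<Rightarrow> real) \<Rightarrow> (nat \<Rightarrow> nat \<Rightarrow> nat \<Rightarrow> 'a list \<Rightarrow> real \<Rightarrow> real)
   \<Rightarrow> nat \<Rightarrow> real" where
  "expected_payment Prior m n fs B K \<phi> h i =
     (\<integral>D. (\<integral>\<omega>. (let xs = (\<lambda>j. fs j (tuple_list (n j) (\<omega> j))) in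
                  (\<Sum>t<length (others m xs i). payment B K \<phi> h m xs i t)
                    / real (length (others m xs i)))
             \<partial>(PiM {..<m} (\<lambda>j. PiM {..<n j} (\<lambda>_. D)))) \<partial>Prior)"

text \<open>The defining property of h^{(k)}_{j,r}: with D \<sim> Prior and, given D,
  Y_1..Y_j, T, Z_1..Z_r i.i.d. from D (coordinates 0..j-1, j, j+1..j+r),
  h(Y, phi_k(T)) is a version of E[F_{phi_k(Z)}(phi_k(T)) | Y, phi_k(T)].\<close>
definition iid_experiment :: "'a measure \<Rightarrow> 'a measure measure \<Rightarrow> nat \<Rightarrow> (nat \<Rightarrow> 'a) measure" where
  "iid_experiment X Prior N = Prior \<bind> (\<lambda>D. PiM {..<N} (\<lambda>_. D))"

definition is_cond_cdf ::
  "'a measure \<Rightarrow> 'a measure measure \<Rightarrow> ('a \<Rightarrow> real) \<Rightarrow> nat \<Rightarrow> nat \<Rightarrow> ('a list \<Rightarrow> real \<Rightarrow> real) \<Rightarrow> bool" where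
  "is_cond_cdf X Prior \<phi> j r g \<longleftrightarrow>
     (let M = iid_experiment X Prior (j + 1 + r);
          V = (\<lambda>\<omega>. (list_tuple j (tuple_list j \<omega>), \<phi> (\<omega> j)));
          Fz = (\<lambda>\<omega>. ecdf (map (\<lambda>q. \<phi> (\<omega> q)) [j+1..<j+1+r]) (\<phi> (\<omega> j)))
      in AE \<omega> in M. g (tuple_list j \<omega>) (\<phi> (\<omega> j)) =
           real_cond_exp M (vimage_algebra (space M) V (PiM {..<j} (\<lambda>_. X) \<Otimes>\<^sub>M borel)) Fz \<omega>)"

end

theory Submission
  imports Defs
begin

text \<open>Individual rationality and budget feasibility hold pointwise: every loss is an average of
  squared differences of numbers in [0, 1], so every payment lies in [0, B / m].

  For truthfulness fix agent i and a deviation f while all other agents report truthfully.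
  Given D all samples are i.i.d., so for every choice t of the test point, relabelling the samples
  as (own data of i, T_i, Z_i) preserves their joint law. Hence the expected payment of agent i
  is B / m (1 - E L), where L is the mean over the features k of the squared error of predicting
  F_{phi_k(Z)}(phi_k(T)) by h(f(Y), phi_k(T)) in the fixed experiment of is_cond_cdf. This
  prediction is a function of (Y, phi_k(T)), whereas the truthful prediction h(Y, phi_k(T)) is the
  conditional expectation of the target given (Y, phi_k(T)), and conditional expectation minimises
  the mean squared error among all such functions.\<close>

lemma length_tuple_list [simp]: "length (tuple_list l y) = l"
  unfolding tuple_list_def by simp

lemma tuple_list_list_tuple: "length ys = l \<Longrightarrow> tuple_list l (list_tuple l ys) = ys"
  unfolding tuple_list_def list_tuple_def by (rule nth_equalityI) auto

lemma list_tuple_tuple_list: "list_tuple l (tuple_list l y) = restrict y {..<l}"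
  unfolding list_tuple_def tuple_list_def by (auto simp: fun_eq_iff)

lemma list_tuple_tuple_list_PiM:
  "y \<in> space (PiM {..<l} (\<lambda>_. X)) \<Longrightarrow> list_tuple l (tuple_list l y) = y"
  by (simp add: list_tuple_tuple_list space_PiM PiE_iff extensional_restrict)

lemma list_tuple_in_space_PiM:
  "ys \<in> lists (space X) \<Longrightarrow> length ys = l \<Longrightarrow> list_tuple l ys \<in> space (PiM {..<l} (\<lambda>_. X))"
  by (auto simp: space_PiM list_tuple_def PiE_iff)

lemma set_tuple_list_subset:
  "l \<le> N \<Longrightarrow> \<omega> \<in> space (PiM {..<N} (\<lambda>_. X)) \<Longrightarrow> set (tuple_list l \<omega>) \<subseteq> space X"
  by (auto simp: tuple_list_def space_PiM PiE_iff)

definition list_cylinders :: "'a measure \<Rightarrow> 'a list set set" where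
  "list_cylinders X = (\<Union>l. {{ys \<in> lists (space X). length ys = l \<and> list_tuple l ys \<in> A} | A.
              A \<in> sets (PiM {..<l} (\<lambda>_. X))})"

lemma list_cylinders_subset: "list_cylinders X \<subseteq> Pow (lists (space X))"
  unfolding list_cylinders_def by auto

lemma listM_eq_sigma: "listM X = sigma (lists (space X)) (list_cylinders X)"
  unfolding listM_def list_cylinders_def ..

lemma space_listM: "space (listM X) = lists (space X)"
  unfolding listM_eq_sigma using list_cylinders_subset by (rule space_measure_of)

lemma sets_listM: "sets (listM X) = sigma_sets (lists (space X)) (list_cylinders X)"
  unfolding listM_eq_sigma using list_cylinders_subset by (rule sets_measure_of)

lemma list_cylinder_in_sets_listM:
  "A \<in> sets (PiM {..<l} (\<lambda>_. X)) \<Longrightarrow>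
    {ys \<in> lists (space X). length ys = l \<and> list_tuple l ys \<in> A} \<in> sets (listM X)"
  unfolding sets_listM list_cylinders_def by (rule sigma_sets.Basic) blast

lemma measurable_length_listM: "length \<in> measurable (listM X) (count_space UNIV)"
proof (subst measurable_count_space_eq2_countable, intro conjI ballI)
  fix l :: nat
  have "length -` {l} \<inter> space (listM X)
      = {ys \<in> lists (space X). length ys = l \<and> list_tuple l ys \<in> space (PiM {..<l} (\<lambda>_. X))}"
    by (auto simp: space_listM intro: list_tuple_in_space_PiM)
  then show "length -` {l} \<inter> space (listM X) \<in> sets (listM X)"
    by (simp add: list_cylinder_in_sets_listM)
qed simp

lemma measurable_list_tuple:
  "list_tuple l \<in> measurable (restrict_space (listM X) {ys. length ys = l}) (PiM {..<l} (\<lambda>_. X))"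
proof (rule measurableI)
  fix ys assume "ys \<in> space (restrict_space (listM X) {ys. length ys = l})"
  then show "list_tuple l ys \<in> space (PiM {..<l} (\<lambda>_. X))"
    by (auto simp: space_restrict_space space_listM intro: list_tuple_in_space_PiM)
next
  fix A assume A: "A \<in> sets (PiM {..<l} (\<lambda>_. X))"
  have len: "{ys. length ys = l} \<inter> space (listM X) \<in> sets (listM X)"
    using measurable_sets[OF measurable_length_listM, of "{l}"]
    by (simp add: vimage_def Int_commute Collect_conj_eq)
  have "list_tuple l -` A \<inter> space (restrict_space (listM X) {ys. length ys = l})
     = {ys \<in> lists (space X). length ys = l \<and> list_tuple l ys \<in> A}"
    by (auto simp: space_restrict_space space_listM)
  also have "\<dots> \<in> sets (restrict_space (listM X) {ys. length ys = l})"
    using list_cylinder_in_sets_listM[OF A] by (subst sets_restrict_space_iff[OF len]) auto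
  finally show "list_tuple l -` A \<inter> space (restrict_space (listM X) {ys. length ys = l})
      \<in> sets (restrict_space (listM X) {ys. length ys = l})" .
qed

lemma measurable_length_cases_listM:
  fixes H :: "nat \<Rightarrow> 'a list \<Rightarrow> real \<Rightarrow> real"
  assumes H: "\<And>l. (\<lambda>(y, v). H l (tuple_list l y) v) \<in> borel_measurable (PiM {..<l} (\<lambda>_. X) \<Otimes>\<^sub>M borel)"
  shows "(\<lambda>(ys, v). H (length ys) ys v) \<in> borel_measurable (listM X \<Otimes>\<^sub>M borel)"
proof -
  define F where "F l p = (if length (fst p) = l then H l (fst p) (snd p) else 0)" for l p
  have len: "(\<lambda>p. length (fst p)) \<in> listM X \<Otimes>\<^sub>M borel \<rightarrow>\<^sub>M count_space UNIV"
    by (rule measurable_compose[OF measurable_fst measurable_length_listM])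
  have "F l \<in> borel_measurable (listM X \<Otimes>\<^sub>M borel)" for l
  proof -
    let ?R = "restrict_space (listM X \<Otimes>\<^sub>M borel) {p. length (fst p) = l}"
    have "{p \<in> space (listM X \<Otimes>\<^sub>M borel). length (fst p) = l} \<in> sets (listM X \<Otimes>\<^sub>M borel)"
      using measurable_sets[OF len, of "{l}"] by (simp add: vimage_def Int_def conj_commute)
    moreover have "(\<lambda>p. (list_tuple l (fst p), snd p)) \<in> measurable ?R (PiM {..<l} (\<lambda>_. X) \<Otimes>\<^sub>M borel)"
      by (intro measurable_Pair measurable_restrict_space1 measurable_snd
            measurable_compose[OF measurable_restrict_space3[OF measurable_fst] measurable_list_tuple]) auto
    from measurable_compose[OF this H]
    have "(\<lambda>p. H l (fst p) (snd p)) \<in> borel_measurable ?R"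
      by (rule measurable_cong[THEN iffD1, rotated])
         (auto simp: space_restrict_space tuple_list_list_tuple)
    ultimately show ?thesis
      unfolding F_def by (subst measurable_If_restrict_space_iff) auto
  qed
  then have "(\<lambda>p. F (length (fst p)) p) \<in> borel_measurable (listM X \<Otimes>\<^sub>M borel)"
    by (rule measurable_compose_countable[OF _ len])
  then show ?thesis
    by (simp add: F_def case_prod_beta')
qed

lemma strategy_id: "strategy X id"
  unfolding strategy_def
proof (intro allI measurable_sigma_sets[OF sets_listM list_cylinders_subset])
  fix l
  show "(\<lambda>y. id (tuple_list l y)) \<in> space (PiM {..<l} (\<lambda>_. X)) \<rightarrow> lists (space X)"
    by (auto dest: set_tuple_list_subset[OF order_refl])
  fix S assume "S \<in> list_cylinders X"
  then obtain l' A where S: "S = {ys \<in> lists (space X). length ys = l' \<and> list_tuple l' ys \<in> A}"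
    and A: "A \<in> sets (PiM {..<l'} (\<lambda>_. X))"
    unfolding list_cylinders_def by blast
  have "(\<lambda>y. id (tuple_list l y)) -` S \<inter> space (PiM {..<l} (\<lambda>_. X))
      = (if l' = l then A \<inter> space (PiM {..<l} (\<lambda>_. X)) else {})"
    unfolding S by (auto simp: list_tuple_tuple_list_PiM dest: set_tuple_list_subset[OF order_refl])
  then show "(\<lambda>y. id (tuple_list l y)) -` S \<inter> space (PiM {..<l} (\<lambda>_. X)) \<in> sets (PiM {..<l} (\<lambda>_. X))"
    using A by auto
qed

lemma strategy_in_lists:
  assumes "strategy X f" and "ys \<in> lists (space X)"
  shows "f ys \<in> lists (space X)"
proof -
  have "(\<lambda>y. f (tuple_list (length ys) y)) \<in> measurable (PiM {..<length ys} (\<lambda>_. X)) (listM X)"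
    using assms(1) unfolding strategy_def by blast
  from measurable_space[OF this list_tuple_in_space_PiM[OF assms(2) refl]]
  show ?thesis by (simp add: tuple_list_list_tuple space_listM)
qed

lemma measurable_strategy_length_cases:
  fixes H :: "nat \<Rightarrow> 'a list \<Rightarrow> real \<Rightarrow> real"
  assumes f: "strategy X f"
    and H: "\<And>l. (\<lambda>(y, v). H l (tuple_list l y) v) \<in> borel_measurable (PiM {..<l} (\<lambda>_. X) \<Otimes>\<^sub>M borel)"
  shows "(\<lambda>(y, v). H (length (f (tuple_list j y))) (f (tuple_list j y)) v)
           \<in> borel_measurable (PiM {..<j} (\<lambda>_. X) \<Otimes>\<^sub>M borel)"
proof -
  have "(\<lambda>y. f (tuple_list j y)) \<in> measurable (PiM {..<j} (\<lambda>_. X)) (listM X)"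
    using f unfolding strategy_def by blast
  then have "(\<lambda>p. (f (tuple_list j (fst p)), snd p))
      \<in> measurable (PiM {..<j} (\<lambda>_. X) \<Otimes>\<^sub>M borel) (listM X \<Otimes>\<^sub>M borel)"
    by (intro measurable_Pair measurable_compose[OF measurable_fst] measurable_snd)
  from measurable_compose[OF this measurable_length_cases_listM[OF H]]
  show ?thesis by (simp add: case_prod_beta')
qed

lemma measurable_coordinate:
  "q < N \<Longrightarrow> \<phi> \<in> borel_measurable X \<Longrightarrow> (\<lambda>\<omega>. \<phi> (\<omega> q)) \<in> borel_measurable (PiM {..<N} (\<lambda>_. X))"
  by (rule measurable_compose[OF measurable_component_singleton]) auto

lemma measurable_data_feature_pair:
  assumes "\<phi> \<in> borel_measurable X" and "j < N"
  shows "(\<lambda>\<omega>. (list_tuple j (tuple_list j \<omega>), \<phi> (\<omega> j)))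
      \<in> measurable (PiM {..<N} (\<lambda>_. X)) (PiM {..<j} (\<lambda>_. X) \<Otimes>\<^sub>M borel)"
  unfolding list_tuple_tuple_list
  using assms by (intro measurable_Pair measurable_restrict_subset measurable_coordinate) auto

lemma measurable_emeasure_prob_algebra:
  "a \<in> sets A \<Longrightarrow> (\<lambda>M. emeasure M a) \<in> prob_algebra A \<rightarrow>\<^sub>M borel"
  unfolding prob_algebra_def by (intro measurable_restrict_space1 measurable_emeasure_subprob_algebra)

lemma measurable_PiM_power_prob_algebra:
  assumes I: "finite I"
  shows "(\<lambda>D. PiM I (\<lambda>_. D)) \<in> measurable (prob_algebra X) (prob_algebra (PiM I (\<lambda>_. X)))"
proof (rule measurable_prob_algebra_generated[OF sets_PiM Int_stable_prod_algebra prod_algebra_sets_into_space])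
  fix D assume "D \<in> space (prob_algebra X)"
  then have D: "prob_space D" "sets D = sets X" by (auto simp: space_prob_algebra)
  then show "prob_space (PiM I (\<lambda>_. D))" by (intro prob_space_PiM) auto
  show "sets (PiM I (\<lambda>_. D)) = sets (PiM I (\<lambda>_. X))" using D by (intro sets_PiM_cong) auto
next
  fix A assume "A \<in> prod_algebra I (\<lambda>_. X)"
  then obtain E where A: "A = Pi\<^sub>E I E" and E: "E \<in> (\<Pi> i\<in>I. sets X)"
    by (rule prod_algebraE_all)
  have "emeasure (PiM I (\<lambda>_. D)) A = (\<Prod>i\<in>I. emeasure D (E i))" if "D \<in> space (prob_algebra X)" for D
  proof -
    from that have D: "prob_space D" "sets D = sets X" by (auto simp: space_prob_algebra)
    interpret product_sigma_finite "\<lambda>_. D"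
      by (intro product_sigma_finite.intro prob_space_imp_sigma_finite D)
    show ?thesis unfolding A by (rule emeasure_PiM[OF I]) (use E D in auto)
  qed
  moreover have "(\<lambda>D. \<Prod>i\<in>I. emeasure D (E i)) \<in> borel_measurable (prob_algebra X)"
    using E by (intro borel_measurable_prod_ennreal measurable_emeasure_prob_algebra) auto
  ultimately show "(\<lambda>D. emeasure (PiM I (\<lambda>_. D)) A) \<in> borel_measurable (prob_algebra X)"
    by (subst measurable_cong) auto
qed

lemma measurable_PiM_uncurry:
  "(\<lambda>\<omega>. \<lambda>p\<in>Sigma I J. \<omega> (fst p) (snd p))
     \<in> measurable (\<Pi>\<^sub>M i\<in>I. \<Pi>\<^sub>M j\<in>J i. M i j) (\<Pi>\<^sub>M p\<in>Sigma I J. M (fst p) (snd p))"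
proof (rule measurable_restrict)
  fix p assume "p \<in> Sigma I J"
  then have "fst p \<in> I" "snd p \<in> J (fst p)" by auto
  from measurable_compose[OF measurable_component_singleton[OF this(1), of "\<lambda>i. \<Pi>\<^sub>M j\<in>J i. M i j"]
      measurable_component_singleton[OF this(2), of "M (fst p)"]]
  show "(\<lambda>\<omega>. \<omega> (fst p) (snd p)) \<in> measurable (\<Pi>\<^sub>M i\<in>I. \<Pi>\<^sub>M j\<in>J i. M i j) (M (fst p) (snd p))" .
qed

lemma distr_PiM_uncurry:
  fixes M :: "'i \<Rightarrow> 'j \<Rightarrow> 'a measure"
  assumes I: "finite I" and J: "\<And>i. i \<in> I \<Longrightarrow> finite (J i)" and M: "\<And>i j. prob_space (M i j)"
  shows "distr (\<Pi>\<^sub>M i\<in>I. \<Pi>\<^sub>M j\<in>J i. M i j) (\<Pi>\<^sub>M p\<in>Sigma I J. M (fst p) (snd p))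
           (\<lambda>\<omega>. \<lambda>p\<in>Sigma I J. \<omega> (fst p) (snd p)) = (\<Pi>\<^sub>M p\<in>Sigma I J. M (fst p) (snd p))"
    (is "distr ?N ?S ?u = ?S")
proof -
  interpret flat: product_sigma_finite "\<lambda>p. M (fst p) (snd p)"
    by (intro product_sigma_finite.intro prob_space_imp_sigma_finite M)
  interpret nested: product_sigma_finite "\<lambda>i. \<Pi>\<^sub>M j\<in>J i. M i j"
    by (intro product_sigma_finite.intro prob_space_imp_sigma_finite prob_space_PiM M)
  show ?thesis
  proof (rule flat.PiM_eqI)
    fix A assume A: "\<And>p. p \<in> Sigma I J \<Longrightarrow> A p \<in> sets (M (fst p) (snd p))"
    have "?u -` Pi\<^sub>E (Sigma I J) A \<inter> space ?N = (\<Pi>\<^sub>E i\<in>I. \<Pi>\<^sub>E j\<in>J i. A (i, j))"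
      using A[THEN sets.sets_into_space] by (auto simp: space_PiM PiE_iff extensional_def) blast+
    moreover have "Pi\<^sub>E (Sigma I J) A \<in> sets ?S"
      using A I J by (intro sets_PiM_I_finite) auto
    ultimately have "emeasure (distr ?N ?S ?u) (Pi\<^sub>E (Sigma I J) A)
        = emeasure ?N (\<Pi>\<^sub>E i\<in>I. \<Pi>\<^sub>E j\<in>J i. A (i, j))"
      by (simp add: emeasure_distr[OF measurable_PiM_uncurry])
    also have "\<dots> = (\<Prod>i\<in>I. emeasure (\<Pi>\<^sub>M j\<in>J i. M i j) (\<Pi>\<^sub>E j\<in>J i. A (i, j)))"
      using A I J by (intro nested.emeasure_PiM sets_PiM_I_finite) auto
    also have "\<dots> = (\<Prod>i\<in>I. \<Prod>j\<in>J i. emeasure (M i j) (A (i, j)))"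
      using A J
      by (intro prod.cong refl product_sigma_finite.emeasure_PiM product_sigma_finite.intro
            prob_space_imp_sigma_finite M) auto
    also have "\<dots> = (\<Prod>p\<in>Sigma I J. emeasure (M (fst p) (snd p)) (A p))"
      using I J by (subst prod.Sigma) (auto simp: split_def)
    finally show "emeasure (distr ?N ?S ?u) (Pi\<^sub>E (Sigma I J) A)
        = (\<Prod>p\<in>Sigma I J. emeasure (M (fst p) (snd p)) (A p))" .
  qed (use I J in auto)
qed

lemma measurable_PiM_flatten:
  "set L \<subseteq> Sigma I J \<Longrightarrow> (\<lambda>\<omega>. \<lambda>q\<in>{..<length L}. \<omega> (fst (L ! q)) (snd (L ! q)))
     \<in> measurable (\<Pi>\<^sub>M i\<in>I. \<Pi>\<^sub>M j\<in>J i. M i j) (\<Pi>\<^sub>M q\<in>{..<length L}. M (fst (L ! q)) (snd (L ! q)))"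
proof (rule measurable_restrict)
  fix q assume "set L \<subseteq> Sigma I J" "q \<in> {..<length L}"
  then have "L ! q \<in> Sigma I J"
    using nth_mem[of q L] by auto
  then have "fst (L ! q) \<in> I" "snd (L ! q) \<in> J (fst (L ! q))"
    by (cases "L ! q"; simp)+
  from measurable_compose[OF measurable_component_singleton[OF this(1), of "\<lambda>i. \<Pi>\<^sub>M j\<in>J i. M i j"]
      measurable_component_singleton[OF this(2), of "M (fst (L ! q))"]]
  show "(\<lambda>\<omega>. \<omega> (fst (L ! q)) (snd (L ! q)))
      \<in> measurable (\<Pi>\<^sub>M i\<in>I. \<Pi>\<^sub>M j\<in>J i. M i j) (M (fst (L ! q)) (snd (L ! q)))" .
qed

lemma distr_PiM_flatten:
  fixes M :: "'i \<Rightarrow> 'j \<Rightarrow> 'a measure" and L :: "('i \<times> 'j) list"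
  assumes L: "distinct L" "set L = Sigma I J"
    and I: "finite I" and J: "\<And>i. i \<in> I \<Longrightarrow> finite (J i)" and M: "\<And>i j. prob_space (M i j)"
  shows "distr (\<Pi>\<^sub>M i\<in>I. \<Pi>\<^sub>M j\<in>J i. M i j) (\<Pi>\<^sub>M q\<in>{..<length L}. M (fst (L ! q)) (snd (L ! q)))
           (\<lambda>\<omega>. \<lambda>q\<in>{..<length L}. \<omega> (fst (L ! q)) (snd (L ! q)))
         = (\<Pi>\<^sub>M q\<in>{..<length L}. M (fst (L ! q)) (snd (L ! q)))"
    (is "distr ?N ?F ?flatten = ?F")
proof -
  let ?S = "\<Pi>\<^sub>M p\<in>Sigma I J. M (fst p) (snd p)"
  let ?u = "\<lambda>\<omega>. \<lambda>p\<in>Sigma I J. \<omega> (fst p) (snd p)"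
  let ?reindex = "\<lambda>\<omega>. \<lambda>q\<in>{..<length L}. \<omega> (L ! q)"
  have reindex: "?reindex \<in> measurable ?S ?F"
    using L(2) nth_mem by (intro measurable_restrict measurable_component_singleton) blast
  have "distr ?N ?F ?flatten = distr ?N ?F (?reindex \<circ> ?u)"
    using L(2) nth_mem by (intro distr_cong) (auto simp: fun_eq_iff)
  also have "\<dots> = distr (distr ?N ?S ?u) ?F ?reindex"
    by (rule distr_distr[OF reindex measurable_PiM_uncurry, symmetric])
  also have "\<dots> = distr ?S ?F ?reindex"
    using I J M by (simp add: distr_PiM_uncurry)
  also have "\<dots> = ?F"
    using L nth_mem by (intro distr_PiM_reindex M) (auto simp: inj_on_nth)
  finally show ?thesis .
qed

context
  fixes X :: "'a measure" and Prior :: "'a measure measure"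
  assumes prior: "prob_space Prior" "sets Prior = sets (prob_algebra X)"
begin

lemma prior_in_space_prob_algebra: "Prior \<in> space (prob_algebra (prob_algebra X))"
  using prior by (simp add: space_prob_algebra)

lemma prob_space_iid_experiment: "prob_space (iid_experiment X Prior N)"
  unfolding iid_experiment_def
  by (rule prob_space_bind'[OF prior_in_space_prob_algebra measurable_PiM_power_prob_algebra]) simp

lemma sets_iid_experiment: "sets (iid_experiment X Prior N) = sets (PiM {..<N} (\<lambda>_. X))"
  unfolding iid_experiment_def
  by (rule sets_bind'[OF prior_in_space_prob_algebra measurable_PiM_power_prob_algebra]) simp

lemma integral_iid_experiment:
  fixes F :: "(nat \<Rightarrow> 'a) \<Rightarrow> real"
  assumes F: "F \<in> borel_measurable (PiM {..<N} (\<lambda>_. X))"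
    and bounded: "\<And>\<omega>. \<omega> \<in> space (PiM {..<N} (\<lambda>_. X)) \<Longrightarrow> \<bar>F \<omega>\<bar> \<le> C"
  shows "(\<integral>\<omega>. F \<omega> \<partial>iid_experiment X Prior N) = (\<integral>D. (\<integral>\<omega>. F \<omega> \<partial>PiM {..<N} (\<lambda>_. D)) \<partial>Prior)"
proof -
  have space_Prior: "space Prior = space (prob_algebra X)"
    using sets_eq_imp_space_eq[OF prior(2)] .
  have "(\<lambda>D. PiM {..<N} (\<lambda>_. D)) \<in> Prior \<rightarrow>\<^sub>M subprob_algebra (PiM {..<N} (\<lambda>_. X))"
    using measurable_prob_algebraD[OF measurable_PiM_power_prob_algebra[OF finite_lessThan]]
    by (simp add: measurable_cong_sets[OF prior(2) refl])
  moreover have "AE D in Prior. emeasure (PiM {..<N} (\<lambda>_. D)) (space (PiM {..<N} (\<lambda>_. D))) \<le> ennreal 1"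
    by (intro AE_I2) (auto simp: space_Prior space_prob_algebra prob_space.emeasure_space_1 prob_space_PiM)
  ultimately show ?thesis
    unfolding iid_experiment_def
    using integral_bind[OF F bounded _ prob_space.axioms(1)[OF prior(1)]] by blast
qed

end

section \<open>Conditional expectation as least-squares predictor\<close>

lemma subalgebra_vimage_algebra:
  assumes f: "f \<in> measurable M N"
  shows "subalgebra M (vimage_algebra (space M) f N)"
proof -
  have "f \<in> space M \<rightarrow> space N"
    using measurable_space[OF f] by auto
  then show ?thesis
    unfolding subalgebra_def using measurable_sets[OF f] by (auto simp: sets_vimage_algebra2)
qed

lemma real_cond_exp_least_squares:
  fixes F a g :: "'b \<Rightarrow> real"
  assumes "prob_space M" and sub: "subalgebra M G"
    and F: "F \<in> borel_measurable M" and a: "a \<in> borel_measurable G" and g: "g \<in> borel_measurable G"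
    and bounded: "\<And>x. x \<in> space M \<Longrightarrow> \<bar>F x\<bar> \<le> C \<and> \<bar>a x\<bar> \<le> C \<and> \<bar>g x\<bar> \<le> C"
    and a_cond_exp: "AE x in M. a x = real_cond_exp M G F x"
  shows "(\<integral>x. (a x - F x)\<^sup>2 \<partial>M) \<le> (\<integral>x. (g x - F x)\<^sup>2 \<partial>M)"
proof -
  interpret prob_space M by fact
  interpret finite_measure_subalgebra M G by unfold_locales (rule sub)
  define d where "d x = g x - a x" for x
  have d: "d \<in> borel_measurable G"
    unfolding d_def using a g by measurable
  have [measurable]: "a \<in> borel_measurable M" "d \<in> borel_measurable M"
    using measurable_from_subalg[OF sub] a d by auto
  have integrable_mult: "integrable M (\<lambda>x. u x * v x)"
    if uv: "u \<in> borel_measurable M" "v \<in> borel_measurable M"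
      and bound: "\<And>x. x \<in> space M \<Longrightarrow> \<bar>u x\<bar> \<le> 2 * C \<and> \<bar>v x\<bar> \<le> 2 * C" for u v
  proof (rule integrable_const_bound[where B = "2 * C * (2 * C)"])
    have "\<bar>u x\<bar> * \<bar>v x\<bar> \<le> 2 * C * (2 * C)" if "x \<in> space M" for x
      using bound[OF that] by (intro mult_mono) auto
    then show "AE x in M. norm (u x * v x) \<le> 2 * C * (2 * C)"
      by (intro AE_I2) (simp add: abs_mult)
  qed (use uv in measurable)
  have "\<bar>d x\<bar> \<le> 2 * C \<and> \<bar>a x - F x\<bar> \<le> 2 * C \<and> \<bar>a x\<bar> \<le> 2 * C \<and> \<bar>F x\<bar> \<le> 2 * C" if "x \<in> space M" for x
    using bounded[OF that] unfolding d_def by auto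
  then have integrable: "integrable M (\<lambda>x. (a x - F x) * (a x - F x))" "integrable M (\<lambda>x. d x * d x)"
    "integrable M (\<lambda>x. d x * a x)" "integrable M (\<lambda>x. d x * F x)"
    using F by (auto intro!: integrable_mult)
  have "(\<integral>x. d x * a x \<partial>M) = (\<integral>x. d x * real_cond_exp M G F x \<partial>M)"
    using a_cond_exp by (intro integral_cong_AE) auto
  also have "\<dots> = (\<integral>x. d x * F x \<partial>M)"
    by (rule real_cond_exp_intg(2)[OF integrable(4) d F])
  finally have orthogonal: "(\<integral>x. d x * a x \<partial>M) = (\<integral>x. d x * F x \<partial>M)" .
  have "(\<integral>x. (g x - F x)\<^sup>2 \<partial>M)
      = (\<integral>x. (a x - F x) * (a x - F x) + (d x * d x + 2 * (d x * a x - d x * F x)) \<partial>M)"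
    by (rule Bochner_Integration.integral_cong) (auto simp: d_def power2_eq_square algebra_simps)
  also have "\<dots> = (\<integral>x. (a x - F x)\<^sup>2 \<partial>M) + (\<integral>x. d x * d x \<partial>M)"
    using integrable orthogonal by (simp add: power2_eq_square)
  also have "\<dots> \<ge> (\<integral>x. (a x - F x)\<^sup>2 \<partial>M)"
    by simp
  finally show ?thesis .
qed

lemma ecdf_bounds: "ecdf S t \<in> {0..1}"
  unfolding ecdf_def by (cases "S = []") (auto simp: divide_le_eq_1 length_filter_le)

lemma measurable_ecdf_map:
  fixes u :: "nat \<Rightarrow> 'b \<Rightarrow> real"
  assumes u: "\<And>q. q \<in> set qs \<Longrightarrow> u q \<in> borel_measurable M" and v[measurable]: "v \<in> borel_measurable M"
  shows "(\<lambda>\<omega>. ecdf (map (\<lambda>q. u q \<omega>) qs) (v \<omega>)) \<in> borel_measurable M"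
proof -
  have "(\<lambda>\<omega>. real (length (filter (\<lambda>s. s \<le> v \<omega>) (map (\<lambda>q. u q \<omega>) qs)))) \<in> borel_measurable M"
    using u
  proof (induction qs)
    case (Cons q qs)
    then have [measurable]: "u q \<in> borel_measurable M"
      "(\<lambda>\<omega>. real (length (filter (\<lambda>s. s \<le> v \<omega>) (map (\<lambda>q. u q \<omega>) qs)))) \<in> borel_measurable M"
      by auto
    have "(\<lambda>\<omega>. (if u q \<omega> \<le> v \<omega> then 1 else 0) + real (length (filter (\<lambda>s. s \<le> v \<omega>) (map (\<lambda>q. u q \<omega>) qs))))
        \<in> borel_measurable M"
      by measurable
    then show ?case
      by (rule measurable_cong[THEN iffD1, rotated]) simp
  qed simp
  then show ?thesis
    unfolding ecdf_def length_map by measurable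
qed

lemma square_diff_unit_interval: "a \<in> {0..1} \<Longrightarrow> b \<in> {0..1} \<Longrightarrow> (a - b)\<^sup>2 \<in> {0..(1::real)}"
  by (auto simp: abs_square_le_1)

lemma mean_unit_interval:
  "(\<And>k. k < K \<Longrightarrow> a k \<in> {0..1}) \<Longrightarrow> 1 / real K * (\<Sum>k<K. a k) \<in> {0..(1::real)}"
proof -
  assume a: "\<And>k. k < K \<Longrightarrow> a k \<in> {0..1}"
  have "(\<Sum>k<K. a k) \<le> real K"
    using sum_mono[of "{..<K}" a "\<lambda>_. 1"] a by auto
  moreover have "0 \<le> (\<Sum>k<K. a k)"
    using a by (intro sum_nonneg) auto
  ultimately show ?thesis
    by (cases "K = 0") (auto simp: field_simps)
qed

lemma length_remove_at: "t < length zs \<Longrightarrow> length (remove_at t zs) = length zs - 1"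
  unfolding remove_at_def by simp

lemma loss_bounds:
  assumes h_range: "\<And>k j r ys v. k < K \<Longrightarrow> r \<ge> 1 \<Longrightarrow> length ys = j \<Longrightarrow> set ys \<subseteq> space X \<Longrightarrow>
        h k j r ys v \<in> {0..1}"
    and "set (xs i) \<subseteq> space X" and "2 \<le> length (others m xs i)" and "t < length (others m xs i)"
  shows "loss K \<phi> h m xs i t \<in> {0..1}"
  unfolding loss_def Let_def
  using assms by (intro mean_unit_interval square_diff_unit_interval ecdf_bounds h_range)
    (auto simp: length_remove_at)

lemma payment_bounds:
  assumes "B \<ge> 0" and "loss K \<phi> h m xs i t \<in> {0..1}"
  shows "0 \<le> payment B K \<phi> h m xs i t" and "payment B K \<phi> h m xs i t \<le> B / real m"
proof -
  have "0 \<le> B / real m" using assms(1) by simp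
  then show "0 \<le> payment B K \<phi> h m xs i t" "payment B K \<phi> h m xs i t \<le> B / real m"
    unfolding payment_def using assms(2) by (intro mult_nonneg_nonneg mult_left_le; simp)+
qed

lemma abs_mult_complement_le: "x \<in> {0..1} \<Longrightarrow> \<bar>c * (1 - x)\<bar> \<le> \<bar>c :: real\<bar>"
  unfolding abs_mult by (rule mult_left_le) auto

section \<open>Relabelling the samples\<close>

lemma remove_at_map: "remove_at t (map g zs) = map g (remove_at t zs)"
  unfolding remove_at_def by (simp add: take_map drop_map)

lemma mset_remove_at: "t < length zs \<Longrightarrow> mset (zs ! t # remove_at t zs) = mset zs"
  unfolding remove_at_def by (subst (3) id_take_nth_drop[of t zs]) simp_all

text \<open>Position (j, b) is the b-th sample of agent j; the positions are listed in the order in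
  which others concatenates the submissions.\<close>
definition pooled_positions :: "nat \<Rightarrow> (nat \<Rightarrow> nat) \<Rightarrow> nat \<Rightarrow> (nat \<times> nat) list" where
  "pooled_positions m n i = concat (map (\<lambda>j. map (\<lambda>b. (j, b)) [0..<n j]) (filter (\<lambda>j. j \<noteq> i) [0..<m]))"

text \<open>Agent i's own samples, then the test point T_i (the t-th pooled sample), then the reference
  points Z_i: the coordinates of the experiment in is_cond_cdf with j = n i.\<close>
definition experiment_positions :: "nat \<Rightarrow> (nat \<Rightarrow> nat) \<Rightarrow> nat \<Rightarrow> nat \<Rightarrow> (nat \<times> nat) list" where
  "experiment_positions m n i t =
     map (\<lambda>b. (i, b)) [0..<n i] @ [pooled_positions m n i ! t] @ remove_at t (pooled_positions m n i)"

definition relabel :: "nat \<Rightarrow> (nat \<Rightarrow> nat) \<Rightarrow> nat \<Rightarrow> nat \<Rightarrow> (nat \<Rightarrow> nat \<Rightarrow> 'a) \<Rightarrow> nat \<Rightarrow> 'a" where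
  "relabel m n i t \<omega> = (\<lambda>q\<in>{..<length (experiment_positions m n i t)}.
     \<omega> (fst (experiment_positions m n i t ! q)) (snd (experiment_positions m n i t ! q)))"

lemma others_truthful:
  assumes "\<And>j. j \<noteq> i \<Longrightarrow> fs j = id"
  shows "others m (\<lambda>j. fs j (tuple_list (n j) (\<omega> j))) i = map (\<lambda>p. \<omega> (fst p) (snd p)) (pooled_positions m n i)"
  using assms unfolding others_def pooled_positions_def map_concat
  by (auto simp: tuple_list_def intro!: arg_cong[where f = concat])

lemma length_pooled_positions: "length (pooled_positions m n i) = (\<Sum>j\<in>{..<m} - {i}. n j)"
proof -
  have "length (pooled_positions m n i) = sum_list (map n (filter (\<lambda>j. j \<noteq> i) [0..<m]))"
    unfolding pooled_positions_def by (simp add: length_concat comp_def)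
  also have "\<dots> = sum n (set (filter (\<lambda>j. j \<noteq> i) [0..<m]))"
    by (rule sum_list_distinct_conv_sum_set) simp
  also have "set (filter (\<lambda>j. j \<noteq> i) [0..<m]) = {..<m} - {i}"
    by auto
  finally show ?thesis .
qed

lemma set_pooled_positions: "set (pooled_positions m n i) = Sigma ({..<m} - {i}) (\<lambda>j. {..<n j})"
  unfolding pooled_positions_def by auto

lemma distinct_pooled_positions: "distinct (pooled_positions m n i)"
  by (rule card_distinct) (simp add: set_pooled_positions length_pooled_positions card_SigmaI)

lemma length_experiment_positions:
  "t < length (pooled_positions m n i) \<Longrightarrow>
    length (experiment_positions m n i t) = n i + length (pooled_positions m n i)"
  unfolding experiment_positions_def by (simp add: length_remove_at)

lemma mset_experiment_positions:
  "t < length (pooled_positions m n i) \<Longrightarrow>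
    mset (experiment_positions m n i t) = mset (map (\<lambda>b. (i, b)) [0..<n i] @ pooled_positions m n i)"
  unfolding experiment_positions_def using mset_remove_at[of t "pooled_positions m n i"] by simp

lemma distinct_experiment_positions:
  "t < length (pooled_positions m n i) \<Longrightarrow> distinct (experiment_positions m n i t)"
  using distinct_pooled_positions[of m n i]
  by (subst mset_eq_imp_distinct_iff[OF mset_experiment_positions])
    (auto simp: distinct_map inj_on_def set_pooled_positions)

lemma set_experiment_positions:
  "t < length (pooled_positions m n i) \<Longrightarrow> i < m \<Longrightarrow>
    set (experiment_positions m n i t) = Sigma {..<m} (\<lambda>j. {..<n j})"
  by (subst mset_eq_setD[OF mset_experiment_positions]) (auto simp: set_pooled_positions)

lemma map_nth_upt_drop: "map (\<lambda>q. xs ! q) [a..<length xs] = drop a xs"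
  by (rule nth_equalityI) auto

lemma
  fixes \<omega> :: "nat \<Rightarrow> nat \<Rightarrow> 'a"
  assumes t: "t < length (pooled_positions m n i)" and r: "length (pooled_positions m n i) = Suc r"
  defines "pooled \<equiv> map (\<lambda>p. \<omega> (fst p) (snd p)) (pooled_positions m n i)"
  shows tuple_list_relabel: "tuple_list (n i) (relabel m n i t \<omega>) = tuple_list (n i) (\<omega> i)"
    and relabel_test_point: "relabel m n i t \<omega> (n i) = pooled ! t"
    and map_relabel_reference:
      "map (\<lambda>q. g (relabel m n i t \<omega> q)) [n i + 1..<n i + 1 + r] = map g (remove_at t pooled)"
proof -
  define W where "W = map (\<lambda>p. \<omega> (fst p) (snd p)) (experiment_positions m n i t)"
  have W: "W = tuple_list (n i) (\<omega> i) @ [pooled ! t] @ remove_at t pooled"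
    unfolding W_def experiment_positions_def pooled_def tuple_list_def using t by (simp add: remove_at_map)
  have length_W: "length W = n i + 1 + r"
    unfolding W_def using t r by (simp add: length_experiment_positions)
  have relabel_W: "relabel m n i t \<omega> q = W ! q" if "q < length W" for q
    using that unfolding relabel_def W_def by simp
  show "tuple_list (n i) (relabel m n i t \<omega>) = tuple_list (n i) (\<omega> i)"
    using length_W by (auto simp: tuple_list_def relabel_W W nth_append)
  show "relabel m n i t \<omega> (n i) = pooled ! t"
    using length_W by (simp add: relabel_W W nth_append)
  have "map (\<lambda>q. g (relabel m n i t \<omega> q)) [n i + 1..<n i + 1 + r] = map g (map (\<lambda>q. W ! q) [n i + 1..<length W])"
    using length_W by (auto simp: relabel_W)
  then show "map (\<lambda>q. g (relabel m n i t \<omega> q)) [n i + 1..<n i + 1 + r] = map g (remove_at t pooled)"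
    unfolding map_nth_upt_drop W by simp
qed

lemma
  assumes D: "prob_space D" and i: "i < m"
    and t: "t < length (pooled_positions m n i)" and r: "length (pooled_positions m n i) = Suc r"
  shows measurable_relabel: "relabel m n i t
      \<in> measurable (\<Pi>\<^sub>M j\<in>{..<m}. \<Pi>\<^sub>M b\<in>{..<n j}. D) (\<Pi>\<^sub>M q\<in>{..<n i + 1 + r}. D)"
    and distr_relabel: "distr (\<Pi>\<^sub>M j\<in>{..<m}. \<Pi>\<^sub>M b\<in>{..<n j}. D) (\<Pi>\<^sub>M q\<in>{..<n i + 1 + r}. D)
      (relabel m n i t) = (\<Pi>\<^sub>M q\<in>{..<n i + 1 + r}. D)"
proof -
  have length: "length (experiment_positions m n i t) = n i + 1 + r"
    using t r by (simp add: length_experiment_positions)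
  note set = set_experiment_positions[OF t i]
  show "relabel m n i t \<in> measurable (\<Pi>\<^sub>M j\<in>{..<m}. \<Pi>\<^sub>M b\<in>{..<n j}. D) (\<Pi>\<^sub>M q\<in>{..<n i + 1 + r}. D)"
    using measurable_PiM_flatten[of "experiment_positions m n i t", OF equalityD1[OF set], of "\<lambda>_ _. D"]
    unfolding relabel_def[abs_def] length .
  show "distr (\<Pi>\<^sub>M j\<in>{..<m}. \<Pi>\<^sub>M b\<in>{..<n j}. D) (\<Pi>\<^sub>M q\<in>{..<n i + 1 + r}. D)
      (relabel m n i t) = (\<Pi>\<^sub>M q\<in>{..<n i + 1 + r}. D)"
    using distr_PiM_flatten[OF distinct_experiment_positions[OF t] set, of "\<lambda>_ _. D"] D
    unfolding relabel_def[abs_def] length by simp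
qed

definition sq_prediction_error ::
  "('a \<Rightarrow> real) \<Rightarrow> (nat \<Rightarrow> 'a list \<Rightarrow> real \<Rightarrow> real) \<Rightarrow> ('a list \<Rightarrow> 'a list) \<Rightarrow> nat \<Rightarrow> nat \<Rightarrow> (nat \<Rightarrow> 'a) \<Rightarrow> real"
  where
  "sq_prediction_error \<phi> g f j r \<omega> =
     (g (length (f (tuple_list j \<omega>))) (f (tuple_list j \<omega>)) (\<phi> (\<omega> j))
       - ecdf (map (\<lambda>q. \<phi> (\<omega> q)) [j + 1..<j + 1 + r]) (\<phi> (\<omega> j)))\<^sup>2"

definition experiment_loss ::
  "nat \<Rightarrow> (nat \<Rightarrow> 'a \<Rightarrow> real) \<Rightarrow> (nat \<Rightarrow> nat \<Rightarrow> nat \<Rightarrow> 'a list \<Rightarrow> real \<Rightarrow> real) \<Rightarrow> ('a list \<Rightarrow> 'a list)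
    \<Rightarrow> nat \<Rightarrow> nat \<Rightarrow> (nat \<Rightarrow> 'a) \<Rightarrow> real"
  where
  "experiment_loss K \<phi> h f j r \<omega> = 1 / real K * (\<Sum>k<K. sq_prediction_error (\<phi> k) (\<lambda>l. h k l r) f j r \<omega>)"

lemma measurable_sq_prediction_error:
  assumes \<phi>: "\<phi> \<in> borel_measurable X"
    and g: "\<And>l. (\<lambda>(y, v). g l (tuple_list l y) v) \<in> borel_measurable (PiM {..<l} (\<lambda>_. X) \<Otimes>\<^sub>M borel)"
    and f: "strategy X f"
  shows "sq_prediction_error \<phi> g f j r \<in> borel_measurable (PiM {..<j + 1 + r} (\<lambda>_. X))"
proof -
  let ?P = "PiM {..<j + 1 + r} (\<lambda>_. X)"
  have [measurable]: "(\<lambda>\<omega>. g (length (f (tuple_list j \<omega>))) (f (tuple_list j \<omega>)) (\<phi> (\<omega> j)))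
      \<in> borel_measurable ?P"
    using measurable_compose[OF measurable_data_feature_pair[OF \<phi>, of j "j + 1 + r"]
        measurable_strategy_length_cases[OF f g]]
    by (simp add: tuple_list_list_tuple)
  have [measurable]: "(\<lambda>\<omega>. ecdf (map (\<lambda>q. \<phi> (\<omega> q)) [j + 1..<j + 1 + r]) (\<phi> (\<omega> j))) \<in> borel_measurable ?P"
    using \<phi> by (intro measurable_ecdf_map measurable_coordinate) auto
  show ?thesis
    unfolding sq_prediction_error_def[abs_def] by measurable
qed

lemma sq_prediction_error_bounds:
  assumes g: "\<And>l ys v. length ys = l \<Longrightarrow> set ys \<subseteq> space X \<Longrightarrow> g l ys v \<in> {0..1}"
    and f: "strategy X f" and \<omega>: "\<omega> \<in> space (PiM {..<j + 1 + r} (\<lambda>_. X))"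
  shows "sq_prediction_error \<phi> g f j r \<omega> \<in> {0..1}"
proof -
  have "f (tuple_list j \<omega>) \<in> lists (space X)"
    using strategy_in_lists[OF f] set_tuple_list_subset[OF _ \<omega>, of j] by auto
  then show ?thesis
    unfolding sq_prediction_error_def by (intro square_diff_unit_interval ecdf_bounds g) auto
qed

lemma measurable_experiment_loss:
  assumes "\<And>k. k < K \<Longrightarrow> \<phi> k \<in> borel_measurable X"
    and "\<And>k l. k < K \<Longrightarrow> (\<lambda>(y, v). h k l r (tuple_list l y) v) \<in> borel_measurable (PiM {..<l} (\<lambda>_. X) \<Otimes>\<^sub>M borel)"
    and "strategy X f"
  shows "experiment_loss K \<phi> h f j r \<in> borel_measurable (PiM {..<j + 1 + r} (\<lambda>_. X))"
  unfolding experiment_loss_def[abs_def]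
  using assms by (intro borel_measurable_times borel_measurable_const borel_measurable_sum
      measurable_sq_prediction_error) auto

lemma experiment_loss_bounds:
  assumes "\<And>k l ys v. k < K \<Longrightarrow> length ys = l \<Longrightarrow> set ys \<subseteq> space X \<Longrightarrow> h k l r ys v \<in> {0..1}"
    and "strategy X f" and "\<omega> \<in> space (PiM {..<j + 1 + r} (\<lambda>_. X))"
  shows "experiment_loss K \<phi> h f j r \<omega> \<in> {0..1}"
  unfolding experiment_loss_def
  using assms by (intro mean_unit_interval sq_prediction_error_bounds) auto

lemma payment_relabel:
  assumes fs: "fs i = f" "\<And>j. j \<noteq> i \<Longrightarrow> fs j = id"
    and r: "length (pooled_positions m n i) = Suc r" and t: "t < Suc r"
  shows "payment B K \<phi> h m (\<lambda>j. fs j (tuple_list (n j) (\<omega> j))) i t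
      = B / real m * (1 - experiment_loss K \<phi> h f (n i) r (relabel m n i t \<omega>))"
proof -
  define xs where "xs = (\<lambda>j. fs j (tuple_list (n j) (\<omega> j)))"
  define pooled where "pooled = map (\<lambda>p. \<omega> (fst p) (snd p)) (pooled_positions m n i)"
  have others: "others m xs i = pooled"
    unfolding xs_def pooled_def by (rule others_truthful[OF fs(2)])
  have t': "t < length (pooled_positions m n i)"
    using t r by simp
  have "length (remove_at t pooled) = r"
    using t r by (simp add: pooled_def length_remove_at)
  then have "sq_prediction_error (\<phi> k) (\<lambda>l. h k l r) f (n i) r (relabel m n i t \<omega>)
      = (h k (length (xs i)) (length (remove_at t pooled)) (xs i) (\<phi> k (pooled ! t))
          - ecdf (map (\<phi> k) (remove_at t pooled)) (\<phi> k (pooled ! t)))\<^sup>2" for k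
    unfolding sq_prediction_error_def xs_def fs(1) pooled_def
      tuple_list_relabel[OF t' r] relabel_test_point[OF t' r] map_relabel_reference[OF t' r]
    by simp
  then show ?thesis
    unfolding payment_def loss_def experiment_loss_def xs_def[symmetric] others Let_def by simp
qed

lemma integral_average_payment:
  assumes D: "prob_space D" and i: "i < m"
    and fs: "fs i = f" "\<And>j. j \<noteq> i \<Longrightarrow> fs j = id"
    and r: "length (pooled_positions m n i) = Suc r"
    and loss_meas: "experiment_loss K \<phi> h f (n i) r \<in> borel_measurable (\<Pi>\<^sub>M q\<in>{..<n i + 1 + r}. D)"
    and loss_bounds: "\<And>\<omega>. \<omega> \<in> space (\<Pi>\<^sub>M q\<in>{..<n i + 1 + r}. D) \<Longrightarrow>
        experiment_loss K \<phi> h f (n i) r \<omega> \<in> {0..1}"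
  shows "(\<integral>\<omega>. (let xs = (\<lambda>j. fs j (tuple_list (n j) (\<omega> j))) in
            (\<Sum>t<length (others m xs i). payment B K \<phi> h m xs i t) / real (length (others m xs i)))
          \<partial>(\<Pi>\<^sub>M j\<in>{..<m}. \<Pi>\<^sub>M b\<in>{..<n j}. D))
       = (\<integral>\<omega>. B / real m * (1 - experiment_loss K \<phi> h f (n i) r \<omega>) \<partial>(\<Pi>\<^sub>M q\<in>{..<n i + 1 + r}. D))"
    (is "integral\<^sup>L ?Q _ = integral\<^sup>L ?P _")
proof -
  interpret P: prob_space ?P
    using D by (rule prob_space_PiM)
  define \<Phi> where "\<Phi> = (\<lambda>\<omega>. B / real m * (1 - experiment_loss K \<phi> h f (n i) r \<omega>))"
  have \<Phi>: "\<Phi> \<in> borel_measurable ?P"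
    unfolding \<Phi>_def using loss_meas by measurable
  have "norm (\<Phi> \<omega>) \<le> \<bar>B / real m\<bar>" if "\<omega> \<in> space ?P" for \<omega>
    unfolding real_norm_def \<Phi>_def using loss_bounds[OF that] by (rule abs_mult_complement_le)
  then have "integrable ?P \<Phi>"
    by (rule P.integrable_const_bound[OF AE_I2 \<Phi>])
  have integrable: "integrable ?Q (\<lambda>\<omega>. \<Phi> (relabel m n i t \<omega>))"
    and integral: "(\<integral>\<omega>. \<Phi> (relabel m n i t \<omega>) \<partial>?Q) = integral\<^sup>L ?P \<Phi>" if "t < Suc r" for t
  proof -
    have t: "t < length (pooled_positions m n i)"
      using that r by simp
    note relabel = measurable_relabel[OF D i t r] distr_relabel[OF D i t r]
    show "integrable ?Q (\<lambda>\<omega>. \<Phi> (relabel m n i t \<omega>))"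
      using integrable_distr_eq[OF relabel(1) \<Phi>, unfolded relabel(2)] \<open>integrable ?P \<Phi>\<close> by blast
    show "(\<integral>\<omega>. \<Phi> (relabel m n i t \<omega>) \<partial>?Q) = integral\<^sup>L ?P \<Phi>"
      by (rule integral_distr[OF relabel(1) \<Phi>, unfolded relabel(2), symmetric])
  qed
  have others: "length (others m (\<lambda>j. fs j (tuple_list (n j) (\<omega> j))) i) = Suc r" for \<omega>
    using r by (simp add: others_truthful[OF fs(2)])
  have "integral\<^sup>L ?Q (\<lambda>\<omega>. (let xs = (\<lambda>j. fs j (tuple_list (n j) (\<omega> j))) in
            (\<Sum>t<length (others m xs i). payment B K \<phi> h m xs i t) / real (length (others m xs i))))
      = (\<integral>\<omega>. (\<Sum>t<Suc r. \<Phi> (relabel m n i t \<omega>)) / real (Suc r) \<partial>?Q)"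
    unfolding Let_def others \<Phi>_def using payment_relabel[where fs = fs and i = i, OF fs r] by simp
  also have "\<dots> = (\<Sum>t<Suc r. \<integral>\<omega>. \<Phi> (relabel m n i t \<omega>) \<partial>?Q) / real (Suc r)"
    using integrable by (simp add: Bochner_Integration.integral_sum del: sum.lessThan_Suc)
  also have "\<dots> = integral\<^sup>L ?P \<Phi>"
    using integral by (simp del: sum.lessThan_Suc)
  finally show ?thesis
    unfolding \<Phi>_def .
qed

lemma integral_mult_complement:
  fixes f :: "'a \<Rightarrow> real"
  assumes "prob_space M" and f: "integrable M f"
  shows "(\<integral>x. c * (1 - f x) \<partial>M) = c * (1 - integral\<^sup>L M f)"
proof -
  interpret prob_space M by fact
  have "(\<integral>x. 1 - f x \<partial>M) = (\<integral>x. 1 \<partial>M) - integral\<^sup>L M f"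
    by (rule Bochner_Integration.integral_diff[OF integrable_const f])
  then show ?thesis
    using prob_space.prob_space[OF assms(1)] by simp
qed

lemma expected_payment_eq:
  fixes X :: "'a measure"
  assumes prior: "prob_space Prior" "sets Prior = sets (prob_algebra X)" and i: "i < m"
    and fs: "fs i = f" "\<And>j. j \<noteq> i \<Longrightarrow> fs j = id"
    and r: "length (pooled_positions m n i) = Suc r"
    and loss_meas: "experiment_loss K \<phi> h f (n i) r \<in> borel_measurable (\<Pi>\<^sub>M q\<in>{..<n i + 1 + r}. X)"
    and loss_bounds: "\<And>\<omega>. \<omega> \<in> space (\<Pi>\<^sub>M q\<in>{..<n i + 1 + r}. X) \<Longrightarrow>
        experiment_loss K \<phi> h f (n i) r \<omega> \<in> {0..1}"
  shows "expected_payment Prior m n fs B K \<phi> h i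
      = B / real m * (1 - (\<integral>\<omega>. experiment_loss K \<phi> h f (n i) r \<omega> \<partial>iid_experiment X Prior (n i + 1 + r)))"
proof -
  let ?N = "n i + 1 + r"
  let ?\<Phi> = "\<lambda>\<omega>. B / real m * (1 - experiment_loss K \<phi> h f (n i) r \<omega>)"
  let ?M = "iid_experiment X Prior ?N"
  interpret M: prob_space ?M
    by (rule prob_space_iid_experiment[OF prior])
  have sets_D: "sets (\<Pi>\<^sub>M q\<in>{..<?N}. D) = sets (\<Pi>\<^sub>M q\<in>{..<?N}. X)" if "sets D = sets X" for D :: "'a measure"
    using that by (intro sets_PiM_cong) auto
  have bounded: "\<bar>?\<Phi> \<omega>\<bar> \<le> \<bar>B / real m\<bar>" if "\<omega> \<in> space (\<Pi>\<^sub>M q\<in>{..<?N}. X)" for \<omega>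
    using loss_bounds[OF that] by (rule abs_mult_complement_le)
  have "expected_payment Prior m n fs B K \<phi> h i = (\<integral>D. (\<integral>\<omega>. ?\<Phi> \<omega> \<partial>(\<Pi>\<^sub>M q\<in>{..<?N}. D)) \<partial>Prior)"
    unfolding expected_payment_def
  proof (intro Bochner_Integration.integral_cong refl integral_average_payment[where fs = fs and i = i, OF _ i fs r])
    fix D assume "D \<in> space Prior"
    then have D: "prob_space D" "sets D = sets X"
      using sets_eq_imp_space_eq[OF prior(2)] by (auto simp: space_prob_algebra)
    then show "prob_space D" by simp
    show "experiment_loss K \<phi> h f (n i) r \<in> borel_measurable (\<Pi>\<^sub>M q\<in>{..<?N}. D)"
      using loss_meas by (simp only: measurable_cong_sets[OF sets_D[OF D(2)] refl])
    show "experiment_loss K \<phi> h f (n i) r \<omega> \<in> {0..1}" if "\<omega> \<in> space (\<Pi>\<^sub>M q\<in>{..<?N}. D)" for \<omega>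
      using loss_bounds that sets_eq_imp_space_eq[OF sets_D[OF D(2)]] by simp
  qed
  also have "\<dots> = (\<integral>\<omega>. ?\<Phi> \<omega> \<partial>?M)"
    using loss_meas bounded by (intro integral_iid_experiment[OF prior, symmetric]) measurable
  also have "\<dots> = B / real m * (1 - (\<integral>\<omega>. experiment_loss K \<phi> h f (n i) r \<omega> \<partial>?M))"
    using loss_meas loss_bounds
    by (intro integral_mult_complement M.prob_space_axioms M.integrable_const_bound[where B = 1] AE_I2)
      (auto simp: measurable_cong_sets[OF sets_iid_experiment[OF prior] refl]
        sets_eq_imp_space_eq[OF sets_iid_experiment[OF prior]])
  finally show ?thesis .
qed

lemma integral_sq_prediction_error_truthful_le:
  fixes X :: "'a measure" and g :: "nat \<Rightarrow> 'a list \<Rightarrow> real \<Rightarrow> real"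
  assumes prior: "prob_space Prior" "sets Prior = sets (prob_algebra X)"
    and \<phi>: "\<phi> \<in> borel_measurable X"
    and g_meas: "\<And>l. (\<lambda>(y, v). g l (tuple_list l y) v) \<in> borel_measurable (PiM {..<l} (\<lambda>_. X) \<Otimes>\<^sub>M borel)"
    and g_range: "\<And>l ys v. length ys = l \<Longrightarrow> set ys \<subseteq> space X \<Longrightarrow> g l ys v \<in> {0..1}"
    and g_cond: "is_cond_cdf X Prior \<phi> j r (g j)"
    and f: "strategy X f"
  shows "(\<integral>\<omega>. sq_prediction_error \<phi> g id j r \<omega> \<partial>iid_experiment X Prior (j + 1 + r))
       \<le> (\<integral>\<omega>. sq_prediction_error \<phi> g f j r \<omega> \<partial>iid_experiment X Prior (j + 1 + r))"
proof -
  define M where "M = iid_experiment X Prior (j + 1 + r)"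
  let ?T = "PiM {..<j} (\<lambda>_. X) \<Otimes>\<^sub>M borel"
  define V where "V = (\<lambda>\<omega>. (list_tuple j (tuple_list j \<omega>), \<phi> (\<omega> j)))"
  define G where "G = vimage_algebra (space M) V ?T"
  define F where "F = (\<lambda>\<omega>. ecdf (map (\<lambda>q. \<phi> (\<omega> q)) [j + 1..<j + 1 + r]) (\<phi> (\<omega> j)))"
  define predict where
    "predict f' \<omega> = g (length (f' (tuple_list j \<omega>))) (f' (tuple_list j \<omega>)) (\<phi> (\<omega> j))" for f' \<omega>
  have sets_M: "sets M = sets (PiM {..<j + 1 + r} (\<lambda>_. X))"
    unfolding M_def by (rule sets_iid_experiment[OF prior])
  have V: "V \<in> measurable M ?T"
    unfolding V_def measurable_cong_sets[OF sets_M refl] using \<phi> by (rule measurable_data_feature_pair) simp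
  have predict_meas: "predict f' \<in> borel_measurable G" if "strategy X f'" for f'
  proof -
    have "V \<in> measurable G ?T"
      unfolding G_def using measurable_space[OF V] by (intro measurable_vimage_algebra1) auto
    from measurable_compose[OF this measurable_strategy_length_cases[OF that g_meas]]
    show ?thesis
      by (simp add: predict_def[abs_def] V_def tuple_list_list_tuple)
  qed
  have "\<bar>F \<omega>\<bar> \<le> 1 \<and> \<bar>predict id \<omega>\<bar> \<le> 1 \<and> \<bar>predict f \<omega>\<bar> \<le> 1" if "\<omega> \<in> space M" for \<omega>
  proof -
    have "set (tuple_list j \<omega>) \<subseteq> space X"
      using that by (intro set_tuple_list_subset[of _ "j + 1 + r"]) (auto simp: sets_eq_imp_space_eq[OF sets_M])
    moreover from this have "set (f (tuple_list j \<omega>)) \<subseteq> space X"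
      using strategy_in_lists[OF f, of "tuple_list j \<omega>"] by auto
    ultimately have "predict id \<omega> \<in> {0..1}" "predict f \<omega> \<in> {0..1}"
      unfolding predict_def by (intro g_range; simp)+
    then show ?thesis
      using ecdf_bounds by (auto simp: F_def)
  qed
  moreover have "F \<in> borel_measurable M"
    unfolding F_def measurable_cong_sets[OF sets_M refl]
    using \<phi> by (intro measurable_ecdf_map measurable_coordinate) auto
  moreover have "AE \<omega> in M. predict id \<omega> = real_cond_exp M G F \<omega>"
    using g_cond unfolding is_cond_cdf_def Let_def M_def[symmetric] G_def V_def F_def predict_def by simp
  ultimately have "(\<integral>\<omega>. (predict id \<omega> - F \<omega>)\<^sup>2 \<partial>M) \<le> (\<integral>\<omega>. (predict f \<omega> - F \<omega>)\<^sup>2 \<partial>M)"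
    using real_cond_exp_least_squares[OF prob_space_iid_experiment[OF prior, of "j + 1 + r", folded M_def]
        subalgebra_vimage_algebra[OF V, folded G_def] _ predict_meas[OF strategy_id] predict_meas[OF f]]
    by blast
  then show ?thesis
    unfolding M_def sq_prediction_error_def[abs_def] predict_def F_def .
qed

lemma integral_experiment_loss_truthful_le:
  fixes X :: "'a measure"
  assumes prior: "prob_space Prior" "sets Prior = sets (prob_algebra X)"
    and phi_meas: "\<And>k. k < K \<Longrightarrow> \<phi> k \<in> borel_measurable X"
    and h_meas: "\<And>k l. k < K \<Longrightarrow>
        (\<lambda>(y, v). h k l r (tuple_list l y) v) \<in> borel_measurable (PiM {..<l} (\<lambda>_. X) \<Otimes>\<^sub>M borel)"
    and h_range: "\<And>k l ys v. k < K \<Longrightarrow> length ys = l \<Longrightarrow> set ys \<subseteq> space X \<Longrightarrow> h k l r ys v \<in> {0..1}"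
    and h_cond: "\<And>k. k < K \<Longrightarrow> is_cond_cdf X Prior (\<phi> k) j r (h k j r)"
    and f: "strategy X f"
  shows "(\<integral>\<omega>. experiment_loss K \<phi> h id j r \<omega> \<partial>iid_experiment X Prior (j + 1 + r))
       \<le> (\<integral>\<omega>. experiment_loss K \<phi> h f j r \<omega> \<partial>iid_experiment X Prior (j + 1 + r))"
proof -
  define M where "M = iid_experiment X Prior (j + 1 + r)"
  interpret M: prob_space M
    unfolding M_def by (rule prob_space_iid_experiment[OF prior])
  have sets_M: "sets M = sets (PiM {..<j + 1 + r} (\<lambda>_. X))"
    unfolding M_def by (rule sets_iid_experiment[OF prior])
  have integral: "(\<integral>\<omega>. experiment_loss K \<phi> h f' j r \<omega> \<partial>M)
      = 1 / real K * (\<Sum>k<K. \<integral>\<omega>. sq_prediction_error (\<phi> k) (\<lambda>l. h k l r) f' j r \<omega> \<partial>M)"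
    if f': "strategy X f'" for f'
  proof -
    have "integrable M (sq_prediction_error (\<phi> k) (\<lambda>l. h k l r) f' j r)" if "k < K" for k
      using measurable_sq_prediction_error[OF phi_meas[OF that] h_meas[OF that] f', of j r]
        sq_prediction_error_bounds[OF h_range[OF that] f', where j = j and r = r]
      by (intro M.integrable_const_bound[where B = 1] AE_I2)
        (auto simp: measurable_cong_sets[OF sets_M refl] sets_eq_imp_space_eq[OF sets_M])
    then show ?thesis
      unfolding experiment_loss_def by (simp add: Bochner_Integration.integral_sum)
  qed
  have "(\<integral>\<omega>. sq_prediction_error (\<phi> k) (\<lambda>l. h k l r) id j r \<omega> \<partial>M)
      \<le> (\<integral>\<omega>. sq_prediction_error (\<phi> k) (\<lambda>l. h k l r) f j r \<omega> \<partial>M)" if "k < K" for k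
    unfolding M_def
    by (rule integral_sq_prediction_error_truthful_le[OF prior phi_meas[OF that] h_meas[OF that]
          h_range[OF that] h_cond[OF that] f])
  then show ?thesis
    unfolding M_def[symmetric] integral[OF strategy_id] integral[OF f]
    by (intro mult_left_mono sum_mono) auto
qed

lemma payments_individually_rational_budget_feasible:
  assumes h_range: "\<And>k j r ys v. k < K \<Longrightarrow> r \<ge> 1 \<Longrightarrow> length ys = j \<Longrightarrow> set ys \<subseteq> space X \<Longrightarrow>
        h k j r ys v \<in> {0..1}"
    and B: "B \<ge> 0" and m: "m > 0"
    and xs: "\<forall>j<m. set (xs j) \<subseteq> space X"
    and len: "\<forall>i<m. 2 \<le> length (others m xs i) \<and> t i < length (others m xs i)"
  shows "(\<forall>i<m. payment B K \<phi> h m xs i (t i) \<ge> 0) \<and> (\<Sum>i<m. payment B K \<phi> h m xs i (t i)) \<le> B"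
proof -
  have payment: "0 \<le> payment B K \<phi> h m xs i (t i) \<and> payment B K \<phi> h m xs i (t i) \<le> B / real m"
    if "i < m" for i
  proof -
    have "loss K \<phi> h m xs i (t i) \<in> {0..1}"
      using xs len that by (intro loss_bounds[where X = X, OF h_range]) auto
    from payment_bounds[OF B this] show ?thesis ..
  qed
  have "(\<Sum>i<m. payment B K \<phi> h m xs i (t i)) \<le> (\<Sum>i<m. B / real m)"
    using payment by (intro sum_mono) auto
  also have "\<dots> = B"
    using m by simp
  finally show ?thesis
    using payment by auto
qed

lemma expected_payment_deviation_le:
  fixes X :: "'a measure"
  assumes prior: "prob_space Prior" "sets Prior = sets (prob_algebra X)" and i: "i < m"
    and r: "length (pooled_positions m n i) = Suc r"
    and phi_meas: "\<And>k. k < K \<Longrightarrow> \<phi> k \<in> borel_measurable X"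
    and h_meas: "\<And>k l. k < K \<Longrightarrow>
        (\<lambda>(y, v). h k l r (tuple_list l y) v) \<in> borel_measurable (PiM {..<l} (\<lambda>_. X) \<Otimes>\<^sub>M borel)"
    and h_range: "\<And>k l ys v. k < K \<Longrightarrow> length ys = l \<Longrightarrow> set ys \<subseteq> space X \<Longrightarrow> h k l r ys v \<in> {0..1}"
    and h_cond: "\<And>k. k < K \<Longrightarrow> is_cond_cdf X Prior (\<phi> k) (n i) r (h k (n i) r)"
    and B: "B \<ge> 0" and f: "strategy X f"
  shows "expected_payment Prior m n (\<lambda>j. if j = i then f else id) B K \<phi> h i
      \<le> expected_payment Prior m n (\<lambda>_. id) B K \<phi> h i"
proof -
  let ?L = "\<lambda>f'. \<integral>\<omega>. experiment_loss K \<phi> h f' (n i) r \<omega> \<partial>iid_experiment X Prior (n i + 1 + r)"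
  have expected: "expected_payment Prior m n fs B K \<phi> h i = B / real m * (1 - ?L f')"
    if "strategy X f'" "fs i = f'" "\<And>j. j \<noteq> i \<Longrightarrow> fs j = id" for fs f'
    using that
    by (intro expected_payment_eq[OF prior i _ _ r] measurable_experiment_loss[where h = h and r = r, OF phi_meas h_meas]
        experiment_loss_bounds[where h = h and r = r, OF h_range])
  have "expected_payment Prior m n (\<lambda>j. if j = i then f else id) B K \<phi> h i = B / real m * (1 - ?L f)"
    by (rule expected[OF f]) simp_all
  also have "\<dots> \<le> B / real m * (1 - ?L id)"
    using integral_experiment_loss_truthful_le[where h = h and r = r, OF prior phi_meas h_meas h_range h_cond f] B
    by (intro mult_left_mono diff_left_mono) auto
  also have "\<dots> = expected_payment Prior m n (\<lambda>_. id) B K \<phi> h i"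
    by (rule expected[OF strategy_id, symmetric]) simp_all
  finally show ?thesis .
qed

theorem mainTheorem11:
  fixes X :: "'a measure" and Prior :: "'a measure measure"
    and m K :: nat and n :: "nat \<Rightarrow> nat" and B :: real
    and \<phi> :: "nat \<Rightarrow> 'a \<Rightarrow> real"
    and h :: "nat \<Rightarrow> nat \<Rightarrow> nat \<Rightarrow> 'a list \<Rightarrow> real \<Rightarrow> real"
  assumes m2: "m \<ge> 2"
    and Bpos: "B > 0"
    and prior: "prob_space Prior" "sets Prior = sets (prob_algebra X)"
    and phi_meas: "\<And>k. k < K \<Longrightarrow> \<phi> k \<in> borel_measurable X"
    and h_meas: "\<And>k j r. k < K \<Longrightarrow> r \<ge> 1 \<Longrightarrow>
        (\<lambda>(y, v). h k j r (tuple_list j y) v) \<in> borel_measurable (PiM {..<j} (\<lambda>_. X) \<Otimes>\<^sub>M borel)"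
    and h_range: "\<And>k j r ys v. k < K \<Longrightarrow> r \<ge> 1 \<Longrightarrow> length ys = j \<Longrightarrow> set ys \<subseteq> space X \<Longrightarrow>
        h k j r ys v \<in> {0..1}"
    and h_cond: "\<And>k j r. k < K \<Longrightarrow> r \<ge> 1 \<Longrightarrow> is_cond_cdf X Prior (\<phi> k) j r (h k j r)"
    and sizes: "\<And>i. i < m \<Longrightarrow> (\<Sum>j\<in>{..<m} - {i}. n j) \<ge> 2"
  shows "(\<forall>xs t. (\<forall>j<m. set (xs j) \<subseteq> space X) \<longrightarrow>
              (\<forall>i<m. 2 \<le> length (others m xs i) \<and> t i < length (others m xs i)) \<longrightarrow>
              (\<forall>i<m. payment B K \<phi> h m xs i (t i) \<ge> 0) \<and>
              (\<Sum>i<m. payment B K \<phi> h m xs i (t i)) \<le> B)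
       \<and> (\<forall>i<m. \<forall>f. strategy X f \<longrightarrow>
              expected_payment Prior m n (\<lambda>_. id) B K \<phi> h i
                \<ge> expected_payment Prior m n (\<lambda>j. if j = i then f else id) B K \<phi> h i)"
proof (rule conjI; intro allI impI)
  fix xs :: "nat \<Rightarrow> 'a list" and t :: "nat \<Rightarrow> nat"
  assume "\<forall>j<m. set (xs j) \<subseteq> space X"
    and "\<forall>i<m. 2 \<le> length (others m xs i) \<and> t i < length (others m xs i)"
  with Bpos m2 show "(\<forall>i<m. payment B K \<phi> h m xs i (t i) \<ge> 0) \<and> (\<Sum>i<m. payment B K \<phi> h m xs i (t i)) \<le> B"
    by (intro payments_individually_rational_budget_feasible[where X = X, OF h_range]) auto
next
  fix i f assume i: "i < m" and f: "strategy X f"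
  define r where "r = length (pooled_positions m n i) - 1"
  have r: "length (pooled_positions m n i) = Suc r" and r_pos: "r \<ge> 1"
    using sizes[OF i] unfolding r_def length_pooled_positions by auto
  show "expected_payment Prior m n (\<lambda>_. id) B K \<phi> h i
      \<ge> expected_payment Prior m n (\<lambda>j. if j = i then f else id) B K \<phi> h i"
    using Bpos
    by (intro expected_payment_deviation_le[where h = h and r = r, OF prior i r phi_meas
          h_meas[OF _ r_pos] h_range[OF _ r_pos] h_cond[OF _ r_pos] _ f]) auto
qed

end
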